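(* Let $F:\mathbb{R}^N\times\mathbb{R}\times\mathbb{R}^N\times S^N\to\mathbb{R}$ be continuous and uniformly elliptic: there are $0<\lambda\le\Lambda$ with $\lambda\,\mathrm{tr}(Q)\le F(x,t,p,X)-F(x,t,p,X+Q)\le\Lambda\,\mathrm{tr}(Q)$ for all $x,p,t,X$ and all $Q\in S^N$, $Q\ge0$. Let $A$ be a metric space and $b:\mathbb{R}^N\times A\to\mathbb{R}^N$, $c:\mathbb{R}^N\times A\to\mathbb{R}$ continuous, such that for every $R>0$ there is $K_R$ with $\sup_{|x|\le R,\alpha}(|b|+|c|)\le K_R$ and $|b(x,\alpha)-b(y,\alpha)|\le K_R|x-y|$ for $|x|,|y|\le R$; $c\ge0$ and $c$ continuous in $x$ uniformly in $|x|\le R,\alpha$; and for some $R_o>0$, $\sup_\alpha(b(x,\alpha)\cdot x-c(x,\alpha)|x|^2\log|x|)\le\lambda-(N-1)\Lambda$ for $|x|\ge R_o$. Assume $F(x,t,p,0)\le\sup_{\alpha\in A}\{c(x,\alpha)t-b(x,\alpha)\cdot p\}$ for all $x,t,p$. Let $v\in LSC(\mathbb{R}^N)$ be a viscosity supersolution of $F(x,v,Dv,D^2v)=0$ in $\mathbb{R}^N$ with $\liminf_{|x|\to\infty}v(x)/\log|x|\ge0$. If either $c\equiv0$ or $v\le0$, then $v$ is constant.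
   Context: $S^N$ is the space of real symmetric $N\times N$ matrices. *)

theory Defs
  imports "HOL-Analysis.Analysis"
begin

definition symmetric_mat :: "real^'n^'n \<Rightarrow> bool" where
  "symmetric_mat X \<longleftrightarrow> transpose X = X"

definition psd_mat :: "real^'n^'n \<Rightarrow> bool" where
  "psd_mat Q \<longleftrightarrow> (\<forall>\<xi>. 0 \<le> \<xi> \<bullet> (Q *v \<xi>))"

definition lsc :: "(real^'n \<Rightarrow> real) \<Rightarrow> bool" where
  "lsc v \<longleftrightarrow> (\<forall>x. \<forall>e>0. eventually (\<lambda>y. v x - e < v y) (at x))"

definition C2_with :: "(real^'n \<Rightarrow> real) \<Rightarrow> (real^'n \<Rightarrow> real^'n) \<Rightarrow> (real^'n \<Rightarrow> real^'n^'n) \<Rightarrow> bool" where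
  "C2_with phi Dphi Hphi \<longleftrightarrow>
     (\<forall>x. (phi has_derivative (\<lambda>h. Dphi x \<bullet> h)) (at x)) \<and>
     (\<forall>x. (Dphi has_derivative (\<lambda>h. Hphi x *v h)) (at x)) \<and>
     continuous_on UNIV Hphi"

definition visc_supersolution ::
  "(real^'n \<Rightarrow> real \<Rightarrow> real^'n \<Rightarrow> real^'n^'n \<Rightarrow> real) \<Rightarrow> (real^'n \<Rightarrow> real) \<Rightarrow> bool" where
  "visc_supersolution F v \<longleftrightarrow> lsc v \<and>
     (\<forall>phi Dphi Hphi x0. C2_with phi Dphi Hphi \<and>
        (\<exists>r>0. \<forall>y. dist y x0 < r \<longrightarrow> v x0 - phi x0 \<le> v y - phi y)
        \<longrightarrow> F x0 (v x0) (Dphi x0) (Hphi x0) \<ge> 0)"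

end

theory Submission
  imports Defs "HOL-Real_Asymp.Real_Asymp"
begin

text \<open>
  The proof has two halves. First, v attains its minimum: on a large ball \<open>|x| \<le> \<rho>\<close> it has a
  minimum m by lower semicontinuity, and outside the ball v is compared with the radial function
  \<open>m - \<epsilon> H(|x|\<^sup>2)\<close>, \<open>H(s) \<approx> (ln s + ln ln s)/2\<close>. The drift condition makes it a strict
  subsolution for \<open>|x| > \<rho>\<close>, and the logarithmic growth bound on v puts it below v far out, so it
  stays below v everywhere; letting \<open>\<epsilon> \<rightarrow> 0\<close> gives \<open>v \<ge> m\<close>. Second, a strong minimum principle:
  if \<open>v x > m\<close>, the largest ball around x avoiding \<open>{v = m}\<close> carries a Gaussian Hopf barrier
  below v that touches v from below at a point of \<open>{v = m}\<close>, where it is a strict subsolution,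
  contradicting the supersolution property. In both comparisons the alternative \<open>c = 0\<close> or
  \<open>v \<le> 0\<close> gives the zeroth-order term \<open>c v\<close> the harmless sign.
\<close>

lemma lsc_open_superlevel:
  assumes "lsc v"
  shows "open {y. a < v y}"
proof (rule Topological_Spaces.openI)
  fix x assume x: "x \<in> {y. a < v y}"
  then have "0 < v x - a" by simp
  then have "eventually (\<lambda>y. v x - (v x - a) < v y) (at x)"
    using assms unfolding lsc_def by blast
  then obtain U where "open U" "x \<in> U" "\<forall>y\<in>U. y \<noteq> x \<longrightarrow> a < v y"
    unfolding eventually_at_topological by auto
  with x show "\<exists>U. open U \<and> x \<in> U \<and> U \<subseteq> {y. a < v y}" by auto
qed

lemma lsc_attains_min:
  assumes "lsc v" "compact K" "K \<noteq> {}"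
  shows "\<exists>z\<in>K. \<forall>x\<in>K. v z \<le> v x"
proof (rule ccontr)
  assume "\<not> ?thesis"
  then have "\<forall>x\<in>K. \<exists>y\<in>K. v y < v x" by (auto simp: not_le)
  then obtain g where g: "\<And>x. x \<in> K \<Longrightarrow> g x \<in> K \<and> v (g x) < v x"
    by metis
  have "K \<subseteq> (\<Union>x\<in>K. {y. v (g x) < v y})" using g by blast
  then obtain T where T: "T \<subseteq> K" "finite T" "K \<subseteq> (\<Union>x\<in>T. {y. v (g x) < v y})"
    by (rule compactE_image[OF assms(2), of K "\<lambda>x. {y. v (g x) < v y}",
          OF lsc_open_superlevel[OF assms(1)]])
  then have "T \<noteq> {}" using assms(3) by auto
  define x0 where "x0 = arg_min_on (\<lambda>x. v (g x)) T"
  have x0: "x0 \<in> T" "\<And>x. x \<in> T \<Longrightarrow> v (g x0) \<le> v (g x)"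
    using arg_min_if_finite[OF T(2) \<open>T \<noteq> {}\<close>, of "\<lambda>x. v (g x)"] unfolding x0_def
    by (auto simp: not_less)
  have "g x0 \<in> K" using g T(1) x0(1) by blast
  then obtain x1 where "x1 \<in> T" "v (g x1) < v (g x0)" using T(3) by blast
  then show False using x0(2)[of x1] by linarith
qed

lemma lsc_diff_continuous:
  assumes "lsc v" "continuous_on UNIV phi"
  shows "lsc (\<lambda>x. v x - phi x)"
  unfolding lsc_def
proof (intro allI impI)
  fix x and e :: real assume e: "0 < e"
  have "eventually (\<lambda>y. v x - e/2 < v y) (at x)"
    using assms(1) e unfolding lsc_def by simp
  moreover have "(phi \<longlongrightarrow> phi x) (at x)"
    using assms(2) by (simp add: continuous_on_eq_continuous_at isCont_def)
  then have "eventually (\<lambda>y. dist (phi y) (phi x) < e/2) (at x)"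
    using e unfolding tendsto_iff by (meson half_gt_zero)
  ultimately show "eventually (\<lambda>y. v x - phi x - e < v y - phi y) (at x)"
  proof eventually_elim
    case (elim y)
    then show ?case
      using abs_ge_self[of "phi y - phi x"] unfolding dist_real_def by linarith
  qed
qed

subsection \<open>Radial test functions\<close>

definition outer :: "real^'n \<Rightarrow> real^'n \<Rightarrow> real^'n^'n" where
  "outer u w = (\<chi> i j. u$i * w$j)"

lemma outer_mult_vec: "outer u w *v h = (w \<bullet> h) *\<^sub>R u"
  by (simp add: outer_def vec_eq_iff matrix_vector_mult_def inner_vec_def sum_distrib_left
      sum_distrib_right mult.assoc mult.commute mult.left_commute)

lemma outer_scaleR: "outer (a *\<^sub>R u) (a *\<^sub>R u) = (a * a) *\<^sub>R outer u u"
  by (simp add: outer_def vec_eq_iff)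

lemma C2_with_imp_continuous: "C2_with phi Dphi Hphi \<Longrightarrow> continuous_on UNIV phi"
  unfolding C2_with_def by (meson continuous_at_imp_continuous_on has_derivative_continuous)

lemma C2_with_cong:
  assumes "C2_with phi Dphi Hphi"
    and "\<And>x. phi x = phi' x" "\<And>x. Dphi x = Dphi' x" "\<And>x. Hphi x = Hphi' x"
  shows "C2_with phi' Dphi' Hphi'"
proof -
  have "phi = phi'" "Dphi = Dphi'" "Hphi = Hphi'" using assms(2-4) by auto
  then show ?thesis using assms(1) by simp
qed

definition radial_grad :: "(real \<Rightarrow> real) \<Rightarrow> real^'n \<Rightarrow> real^'n \<Rightarrow> real^'n" where
  "radial_grad G' y x = (2 * G' ((x - y) \<bullet> (x - y))) *\<^sub>R (x - y)"

definition radial_hess :: "(real \<Rightarrow> real) \<Rightarrow> (real \<Rightarrow> real) \<Rightarrow> real^'n \<Rightarrow> real^'n \<Rightarrow> real^'n^'n" where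
  "radial_hess G' G'' y x = (2 * G' ((x - y) \<bullet> (x - y))) *\<^sub>R mat 1
     + (4 * G'' ((x - y) \<bullet> (x - y))) *\<^sub>R outer (x - y) (x - y)"

lemma C2_with_radial:
  fixes y :: "real^'n"
  assumes G: "\<And>s. s \<ge> 0 \<Longrightarrow> (G has_real_derivative G' s) (at s)"
    and G': "\<And>s. s \<ge> 0 \<Longrightarrow> (G' has_real_derivative G'' s) (at s)"
    and G'': "continuous_on {0..} G''"
  shows "C2_with (\<lambda>x. G ((x - y) \<bullet> (x - y))) (radial_grad G' y) (radial_hess G' G'' y)"
  unfolding C2_with_def radial_grad_def radial_hess_def
proof (intro conjI allI)
  fix x :: "real^'n"
  let ?q = "(x - y) \<bullet> (x - y)"
  have q0: "0 \<le> ?q" by simp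
  have dq: "((\<lambda>x. (x - y) \<bullet> (x - y)) has_derivative (\<lambda>h. 2 * ((x - y) \<bullet> h))) (at x)"
    by (auto intro!: derivative_eq_intros simp: inner_commute)
  have dG: "(G has_derivative (\<lambda>h. h * G' ?q)) (at ?q)"
    using G[OF q0] by (simp add: has_field_derivative_def mult.commute[of _ "G' _"])
  have "((\<lambda>x. G ((x - y) \<bullet> (x - y))) has_derivative (\<lambda>h. (2 * ((x - y) \<bullet> h)) * G' ?q)) (at x)"
    using has_derivative_compose[OF dq dG] by simp
  then show "((\<lambda>x. G ((x - y) \<bullet> (x - y))) has_derivative (\<lambda>h. (2 * G' ?q) *\<^sub>R (x - y) \<bullet> h)) (at x)"
    by (simp add: algebra_simps)
  have dG': "(G' has_derivative (\<lambda>h. h * G'' ?q)) (at ?q)"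
    using G'[OF q0] by (simp add: has_field_derivative_def mult.commute[of _ "G'' _"])
  have dG'_compose: "((\<lambda>x. G' ((x - y) \<bullet> (x - y))) has_derivative (\<lambda>h. (2 * ((x - y) \<bullet> h)) * G'' ?q)) (at x)"
    using has_derivative_compose[OF dq dG'] by simp
  have "((\<lambda>x. (2 * G' ((x - y) \<bullet> (x - y))) *\<^sub>R (x - y)) has_derivative
     (\<lambda>h. (2 * G' ?q) *\<^sub>R h + (2 * ((2 * ((x - y) \<bullet> h)) * G'' ?q)) *\<^sub>R (x - y))) (at x)"
    by (rule derivative_eq_intros dG'_compose | simp)+
  moreover have "(\<lambda>h. ((2 * G' ?q) *\<^sub>R mat 1 + (4 * G'' ?q) *\<^sub>R outer (x - y) (x - y)) *v h)
     = (\<lambda>h. (2 * G' ?q) *\<^sub>R h + (2 * ((2 * ((x - y) \<bullet> h)) * G'' ?q)) *\<^sub>R (x - y))"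
    by (rule ext) (simp only: matrix_vector_mult_add_rdistrib outer_mult_vec
        scaleR_matrix_vector_assoc[symmetric] matrix_vector_mul_lid scaleR_scaleR, simp add: algebra_simps)
  ultimately show "((\<lambda>x. (2 * G' ((x - y) \<bullet> (x - y))) *\<^sub>R (x - y)) has_derivative
     (\<lambda>h. ((2 * G' ?q) *\<^sub>R mat 1 + (4 * G'' ?q) *\<^sub>R outer (x - y) (x - y)) *v h)) (at x)"
    by simp
next
  have cq: "continuous_on UNIV (\<lambda>x::real^'n. (x - y) \<bullet> (x - y))" by (intro continuous_intros)
  have cG': "continuous_on {0..} G'"
    using G' by (intro continuous_at_imp_continuous_on ballI DERIV_isCont) auto
  have "continuous_on UNIV (\<lambda>x::real^'n. G' ((x - y) \<bullet> (x - y)))"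
    by (rule continuous_on_compose2[OF cG' cq]) auto
  moreover have "continuous_on UNIV (\<lambda>x::real^'n. G'' ((x - y) \<bullet> (x - y)))"
    by (rule continuous_on_compose2[OF G'' cq]) auto
  moreover have "continuous_on UNIV (\<lambda>x::real^'n. outer (x - y) (x - y))"
    unfolding outer_def by (intro continuous_intros)
  ultimately show "continuous_on UNIV (\<lambda>x. (2 * G' ((x - y) \<bullet> (x - y))) *\<^sub>R mat 1
      + (4 * G'' ((x - y) \<bullet> (x - y))) *\<^sub>R outer (x - y) (x - y))"
    by (intro continuous_intros) auto
qed

lemma C2_with_gaussian:
  fixes y :: "real^'n"
  shows "C2_with (\<lambda>w. a + \<delta> * exp (- al * ((w - y) \<bullet> (w - y))))
     (radial_grad (\<lambda>s. - (al * \<delta> * exp (- al * s))) y)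
     (radial_hess (\<lambda>s. - (al * \<delta> * exp (- al * s))) (\<lambda>s. al * (al * \<delta> * exp (- al * s))) y)"
proof (rule C2_with_radial[where G = "\<lambda>s. a + \<delta> * exp (- al * s)"])
  show "((\<lambda>s. a + \<delta> * exp (- al * s)) has_real_derivative - (al * \<delta> * exp (- al * s))) (at s)" for s
    by (auto intro!: derivative_eq_intros)
  show "((\<lambda>s. - (al * \<delta> * exp (- al * s))) has_real_derivative al * (al * \<delta> * exp (- al * s))) (at s)"
    for s
    by (auto intro!: derivative_eq_intros)
qed (intro continuous_intros)

lemma visc_supersolution_lsc: "visc_supersolution F v \<Longrightarrow> lsc v"
  unfolding visc_supersolution_def by simp

lemma visc_supersolutionD:
  assumes "visc_supersolution F v" "C2_with phi Dphi Hphi" "0 < r"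
    and "\<And>y. dist y x < r \<Longrightarrow> v x - phi x \<le> v y - phi y"
  shows "0 \<le> F x (v x) (Dphi x) (Hphi x)"
  using assms unfolding visc_supersolution_def by blast

lemma visc_supersolution_above_annulus:
  assumes super: "visc_supersolution F v" and C2: "C2_with phi Dphi Hphi"
    and outside: "\<And>w. norm (w - y) \<le> r \<or> R \<le> norm (w - y) \<Longrightarrow> phi w \<le> v w"
    and strict: "\<And>w. r < norm (w - y) \<Longrightarrow> norm (w - y) < R \<Longrightarrow> v w < phi w \<Longrightarrow>
                   F w (v w) (Dphi w) (Hphi w) < 0"
  shows "phi w \<le> v w"
proof (rule ccontr)
  have inside: "r < norm (u - y) \<and> norm (u - y) < R" if "v u < phi u" for u
  proof (rule ccontr)
    assume "\<not> (r < norm (u - y) \<and> norm (u - y) < R)"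
    then have "phi u \<le> v u" by (intro outside) auto
    with that show False by linarith
  qed
  assume "\<not> phi w \<le> v w"
  then have "w \<in> cball y R"
    using inside[of w] by (simp add: dist_norm norm_minus_commute)
  moreover have "lsc (\<lambda>x. v x - phi x)"
    using lsc_diff_continuous visc_supersolution_lsc[OF super] C2_with_imp_continuous[OF C2] by blast
  ultimately obtain z where z: "z \<in> cball y R" "\<And>x. x \<in> cball y R \<Longrightarrow> v z - phi z \<le> v x - phi x"
    using lsc_attains_min[OF _ compact_cball, of _ y R] by blast
  have "v z < phi z" using z(2)[OF \<open>w \<in> cball y R\<close>] \<open>\<not> phi w \<le> v w\<close> by linarith
  then have zr: "r < norm (z - y)" "norm (z - y) < R" using inside by blast+
  have "0 \<le> F z (v z) (Dphi z) (Hphi z)"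
  proof (rule visc_supersolutionD[OF super C2])
    show "0 < R - norm (z - y)" using zr by simp
    fix x assume "dist x z < R - norm (z - y)"
    then have "x \<in> cball y R"
      using dist_triangle[of y x z] by (simp add: dist_norm norm_minus_commute)
    then show "v z - phi z \<le> v x - phi x" by (rule z(2))
  qed
  then show False using strict[OF zr \<open>v z < phi z\<close>] by linarith
qed

subsection \<open>Rank-one matrices and the Pucci bound\<close>

lemma symmetric_mat_outer: "symmetric_mat (a *\<^sub>R outer u u)"
  by (simp add: symmetric_mat_def transpose_def outer_def vec_eq_iff mult.commute)

lemma symmetric_mat_perp: "symmetric_mat (a *\<^sub>R (mat 1 - outer u u))"
  by (simp add: symmetric_mat_def transpose_def outer_def mat_def vec_eq_iff mult.commute)

lemma symmetric_mat_uminus: "symmetric_mat X \<Longrightarrow> symmetric_mat (- X :: real^'n^'n)"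
  unfolding symmetric_mat_def using transpose_scalar[of "-1" X] by simp

lemma trace_scaleR: "trace (a *\<^sub>R A) = a * trace (A :: real^'n^'n)"
  by (simp add: trace_def sum_distrib_left)

lemma trace_outer: "trace (outer u u) = u \<bullet> u"
  by (simp add: trace_def outer_def inner_vec_def)

lemma trace_perp: "trace (mat 1 - outer u u :: real^'n^'n) = real CARD('n) - u \<bullet> u"
  by (simp add: trace_sub trace_I trace_outer)

lemma psd_mat_outer: "0 \<le> a \<Longrightarrow> psd_mat (a *\<^sub>R outer u u)"
  unfolding psd_mat_def
proof
  fix \<xi> assume "0 \<le> a"
  have "\<xi> \<bullet> ((a *\<^sub>R outer u u) *v \<xi>) = a * ((u \<bullet> \<xi>) * (u \<bullet> \<xi>))"
    by (simp only: scaleR_matrix_vector_assoc[symmetric] outer_mult_vec inner_scaleR_right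
        inner_commute[of \<xi> u] mult.assoc)
  then show "0 \<le> \<xi> \<bullet> ((a *\<^sub>R outer u u) *v \<xi>)" using \<open>0 \<le> a\<close> by simp
qed

lemma psd_mat_perp:
  assumes "norm u = 1" "0 \<le> a"
  shows "psd_mat (a *\<^sub>R (mat 1 - outer u u))"
  unfolding psd_mat_def
proof
  fix \<xi>
  have "\<bar>u \<bullet> \<xi>\<bar>\<^sup>2 \<le> (norm \<xi>)\<^sup>2"
    using power_mono[OF Cauchy_Schwarz_ineq2[of u \<xi>] abs_ge_zero, of 2] assms(1) by simp
  then have "(u \<bullet> \<xi>) * (u \<bullet> \<xi>) \<le> \<xi> \<bullet> \<xi>"
    by (simp add: power2_eq_square power2_norm_eq_inner[symmetric])
  then have "0 \<le> \<xi> \<bullet> ((mat 1 - outer u u) *v \<xi>)"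
    by (simp add: matrix_vector_mult_diff_rdistrib outer_mult_vec inner_diff_right inner_commute)
  then show "0 \<le> \<xi> \<bullet> (a *\<^sub>R (mat 1 - outer u u) *v \<xi>)"
    using assms(2) by (simp add: scaleR_matrix_vector_assoc[symmetric])
qed

lemma radial_hessian_decomp:
  fixes d :: "real^'n"
  assumes "d \<noteq> 0"
  shows "A *\<^sub>R mat 1 + B *\<^sub>R outer d d =
    (A + B * (d \<bullet> d)) *\<^sub>R outer (d /\<^sub>R norm d) (d /\<^sub>R norm d)
      + A *\<^sub>R (mat 1 - outer (d /\<^sub>R norm d) (d /\<^sub>R norm d))"
proof -
  have "norm d * norm d = d \<bullet> d" by (simp add: power2_norm_eq_inner[symmetric] power2_eq_square)
  then have "outer (d /\<^sub>R norm d) (d /\<^sub>R norm d) = (1 / (d \<bullet> d)) *\<^sub>R outer d d"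
    using outer_scaleR[of "inverse (norm d)" d] by (simp add: field_simps)
  moreover have "d \<bullet> d \<noteq> 0" using assms by simp
  ultimately show ?thesis by (simp add: algebra_simps)
qed

locale uniformly_elliptic =
  fixes F :: "real^'n \<Rightarrow> real \<Rightarrow> real^'n \<Rightarrow> real^'n^'n \<Rightarrow> real"
    and lam Lam :: real
  assumes lam_pos: "0 < lam" and lam_le_Lam: "lam \<le> Lam"
    and ellipticity: "\<And>x t p X Q. symmetric_mat X \<Longrightarrow> symmetric_mat Q \<Longrightarrow> psd_mat Q \<Longrightarrow>
           lam * trace Q \<le> F x t p X - F x t p (X + Q) \<and> F x t p X - F x t p (X + Q) \<le> Lam * trace Q"
begin

lemma pucci_upper_bound:
  assumes "norm u = 1" "0 \<le> a" "\<beta> \<le> 0"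
  shows "F x t p (a *\<^sub>R outer u u + \<beta> *\<^sub>R (mat 1 - outer u u))
           \<le> F x t p 0 - Lam * (real CARD('n) - 1) * \<beta> - lam * a"
proof -
  define P where "P = a *\<^sub>R outer u u"
  define N where "N = (- \<beta>) *\<^sub>R (mat 1 - outer u u)"
  have uu: "u \<bullet> u = 1" using assms(1) by (simp add: norm_eq_1)
  have N: "symmetric_mat N" "symmetric_mat (- N)"
    unfolding N_def using symmetric_mat_perp symmetric_mat_uminus by auto
  have "psd_mat N"
    unfolding N_def using assms(3) by (intro psd_mat_perp[OF assms(1)]) simp
  have P: "symmetric_mat P" "psd_mat P"
    unfolding P_def using symmetric_mat_outer psd_mat_outer[OF assms(2)] by auto
  have trP: "trace P = a" and trN: "trace N = - \<beta> * (real CARD('n) - 1)"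
    unfolding P_def N_def trace_scaleR trace_outer trace_perp uu by simp_all
  have "- N + P = a *\<^sub>R outer u u + \<beta> *\<^sub>R (mat 1 - outer u u)" "- N + N = 0"
    unfolding P_def N_def by (simp_all add: algebra_simps)
  moreover note ellipticity[OF N(2) P] ellipticity[OF N(2) N(1) \<open>psd_mat N\<close>]
  ultimately have "lam * a \<le> F x t p (- N) - F x t p (a *\<^sub>R outer u u + \<beta> *\<^sub>R (mat 1 - outer u u))"
    and "F x t p (- N) - F x t p 0 \<le> Lam * (- \<beta> * (real CARD('n) - 1))"
    unfolding trP trN by simp_all
  moreover have "Lam * (- \<beta> * (real CARD('n) - 1)) = - (Lam * (real CARD('n) - 1) * \<beta>)"
    by (simp add: algebra_simps)
  ultimately show ?thesis by linarith
qed

end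

subsection \<open>Hopf's lemma and the strong minimum principle\<close>

locale elliptic_bellman = uniformly_elliptic F lam Lam
  for F :: "real^'n \<Rightarrow> real \<Rightarrow> real^'n \<Rightarrow> real^'n^'n \<Rightarrow> real" and lam Lam +
  fixes b :: "real^'n \<Rightarrow> 'a \<Rightarrow> real^'n" and c :: "real^'n \<Rightarrow> 'a \<Rightarrow> real"
  assumes F_zero_le_Sup: "\<And>x t p. F x t p 0 \<le> (SUP \<alpha>. c x \<alpha> * t - b x \<alpha> \<bullet> p)"
    and b_locally_bounded: "\<And>R. \<exists>K. \<forall>x \<alpha>. norm x \<le> R \<longrightarrow> norm (b x \<alpha>) \<le> K"
    and c_nonneg: "\<And>x \<alpha>. 0 \<le> c x \<alpha>"
begin

lemma radial_operator_le:
  assumes "d \<noteq> 0" "A \<le> 0" "0 \<le> A + B * (d \<bullet> d)"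
    and "\<And>\<alpha>. c x \<alpha> * t - A * (b x \<alpha> \<bullet> d) \<le> M"
  shows "F x t (A *\<^sub>R d) (A *\<^sub>R mat 1 + B *\<^sub>R outer d d)
           \<le> M - Lam * (real CARD('n) - 1) * A - lam * (A + B * (d \<bullet> d))"
proof -
  have "(SUP \<alpha>. c x \<alpha> * t - b x \<alpha> \<bullet> (A *\<^sub>R d)) \<le> M"
    using assms(4) by (intro cSUP_least) simp_all
  then have "F x t (A *\<^sub>R d) 0 \<le> M"
    using F_zero_le_Sup[of x t "A *\<^sub>R d"] by linarith
  moreover have "norm (d /\<^sub>R norm d) = 1" using assms(1) by simp
  ultimately show ?thesis
    using pucci_upper_bound[of "d /\<^sub>R norm d" "A + B * (d \<bullet> d)" A x t "A *\<^sub>R d"] assms(2,3)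
    unfolding radial_hessian_decomp[OF assms(1)] by linarith
qed

lemma gaussian_barrier_strict:
  assumes b_bound: "\<And>\<alpha>. norm (b x \<alpha>) \<le> K"
    and R: "0 < R" "R / 2 \<le> norm d" "norm d \<le> R"
    and "0 < al" and al: "K * R + Lam * real CARD('n) + lam \<le> lam * al * R\<^sup>2 / 2"
    and "0 < \<kappa>" and sign: "\<And>\<alpha>. c x \<alpha> * t \<le> 0"
  shows "F x t ((2 * - \<kappa>) *\<^sub>R d) ((2 * - \<kappa>) *\<^sub>R mat 1 + (4 * (al * \<kappa>)) *\<^sub>R outer d d) < 0"
proof -
  define s where "s = al * (d \<bullet> d)"
  have Lam: "0 < Lam" using lam_pos lam_le_Lam by linarith
  have "0 \<le> K" using b_bound norm_ge_zero order_trans by blast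
  have "(R / 2)\<^sup>2 \<le> d \<bullet> d"
    using power_mono[OF R(2), of 2] R(1) by (simp add: power2_norm_eq_inner)
  then have "R\<^sup>2 \<le> 4 * (d \<bullet> d)" by (simp add: power_divide)
  then have "lam * al * R\<^sup>2 \<le> lam * al * (4 * (d \<bullet> d))"
    using lam_pos \<open>0 < al\<close> by (intro mult_left_mono) auto
  also have "\<dots> = 4 * (lam * s)" by (simp add: s_def ac_simps)
  finally have main: "K * R + Lam * real CARD('n) + lam \<le> 2 * (lam * s)" using al by linarith
  moreover have "0 \<le> K * R" "0 \<le> Lam * real CARD('n)" using \<open>0 \<le> K\<close> R(1) Lam by simp_all
  ultimately have "lam * 1 \<le> lam * (2 * s)" by simp
  then have "1 \<le> 2 * s" using lam_pos by simp
  have "F x t ((2 * - \<kappa>) *\<^sub>R d) ((2 * - \<kappa>) *\<^sub>R mat 1 + (4 * (al * \<kappa>)) *\<^sub>R outer d d)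
      \<le> 2 * \<kappa> * (K * R) - Lam * (real CARD('n) - 1) * (2 * - \<kappa>)
          - lam * (2 * - \<kappa> + 4 * (al * \<kappa>) * (d \<bullet> d))"
  proof (rule radial_operator_le)
    show "d \<noteq> 0" using R by auto
    show "2 * - \<kappa> \<le> 0" using \<open>0 < \<kappa>\<close> by simp
    have "2 * - \<kappa> + 4 * (al * \<kappa>) * (d \<bullet> d) = 2 * \<kappa> * (2 * s - 1)"
      by (simp add: s_def algebra_simps)
    then show "0 \<le> 2 * - \<kappa> + 4 * (al * \<kappa>) * (d \<bullet> d)"
      using \<open>0 < \<kappa>\<close> \<open>1 \<le> 2 * s\<close> by simp
    fix \<alpha>
    have "b x \<alpha> \<bullet> d \<le> norm (b x \<alpha>) * norm d" by (rule norm_cauchy_schwarz)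
    also have "\<dots> \<le> K * R" using mult_mono[OF b_bound R(3) \<open>0 \<le> K\<close> norm_ge_zero] .
    finally have "2 * \<kappa> * (b x \<alpha> \<bullet> d) \<le> 2 * \<kappa> * (K * R)"
      using \<open>0 < \<kappa>\<close> by (intro mult_left_mono) auto
    then show "c x \<alpha> * t - 2 * - \<kappa> * (b x \<alpha> \<bullet> d) \<le> 2 * \<kappa> * (K * R)"
      using sign[of \<alpha>] by (simp add: algebra_simps)
  qed
  also have "\<dots> = 2 * \<kappa> * (K * R + Lam * (real CARD('n) - 1) + lam - 2 * (lam * s))"
    by (simp add: s_def algebra_simps)
  also have "\<dots> < 0"
    using main Lam \<open>0 < \<kappa>\<close> by (intro mult_pos_neg) (auto simp: algebra_simps)
  finally show ?thesis .
qed

lemma log_barrier_strict: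
  assumes "x \<noteq> 0" "0 < \<kappa>" "\<kappa> + (x \<bullet> x) * \<mu> < 0"
    and drift: "\<And>\<alpha>. b x \<alpha> \<bullet> x - c x \<alpha> * (norm x)\<^sup>2 * ln (norm x) \<le> lam - (real CARD('n) - 1) * Lam"
    and sign: "\<And>\<alpha>. c x \<alpha> * (t + 2 * \<kappa> * ((norm x)\<^sup>2 * ln (norm x))) \<le> 0"
  shows "F x t ((2 * - \<kappa>) *\<^sub>R x) ((2 * - \<kappa>) *\<^sub>R mat 1 + (4 * - \<mu>) *\<^sub>R outer x x) < 0"
proof -
  define K0 where "K0 = lam - (real CARD('n) - 1) * Lam"
  have "F x t ((2 * - \<kappa>) *\<^sub>R x) ((2 * - \<kappa>) *\<^sub>R mat 1 + (4 * - \<mu>) *\<^sub>R outer x x)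
      \<le> 2 * \<kappa> * K0 - Lam * (real CARD('n) - 1) * (2 * - \<kappa>) - lam * (2 * - \<kappa> + 4 * - \<mu> * (x \<bullet> x))"
  proof (rule radial_operator_le)
    show "x \<noteq> 0" "2 * - \<kappa> \<le> 0" using assms(1,2) by simp_all
    show "0 \<le> 2 * - \<kappa> + 4 * - \<mu> * (x \<bullet> x)" using assms(2,3) by (simp add: algebra_simps)
    fix \<alpha>
    have "2 * \<kappa> * (b x \<alpha> \<bullet> x) \<le> 2 * \<kappa> * (K0 + c x \<alpha> * (norm x)\<^sup>2 * ln (norm x))"
      using drift[of \<alpha>] assms(2) unfolding K0_def by (intro mult_left_mono) auto
    then show "c x \<alpha> * t - 2 * - \<kappa> * (b x \<alpha> \<bullet> x) \<le> 2 * \<kappa> * K0"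
      using sign[of \<alpha>] by (simp add: algebra_simps)
  qed
  also have "\<dots> = 4 * lam * (\<kappa> + (x \<bullet> x) * \<mu>)"
    by (simp add: K0_def algebra_simps)
  also have "\<dots> < 0" using lam_pos assms(3) by (simp add: mult_pos_neg)
  finally show ?thesis .
qed

lemma drift_bound_pointwise:
  assumes "1 \<le> norm x"
    and "(SUP \<alpha>. b x \<alpha> \<bullet> x - c x \<alpha> * (norm x)\<^sup>2 * ln (norm x)) \<le> K0"
  shows "b x \<alpha> \<bullet> x - c x \<alpha> * (norm x)\<^sup>2 * ln (norm x) \<le> K0"
proof -
  obtain K where K: "\<And>\<beta>. norm (b x \<beta>) \<le> K"
    using b_locally_bounded[of "norm x"] by blast
  have "b x \<beta> \<bullet> x - c x \<beta> * (norm x)\<^sup>2 * ln (norm x) \<le> K * norm x" for \<beta>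
  proof -
    have "b x \<beta> \<bullet> x \<le> norm (b x \<beta>) * norm x" by (rule norm_cauchy_schwarz)
    also have "\<dots> \<le> K * norm x" using K by (rule mult_right_mono) simp
    moreover have "0 \<le> c x \<beta> * (norm x)\<^sup>2 * ln (norm x)" using c_nonneg assms(1) by simp
    ultimately show ?thesis by linarith
  qed
  then have "bdd_above (range (\<lambda>\<beta>. b x \<beta> \<bullet> x - c x \<beta> * (norm x)\<^sup>2 * ln (norm x)))"
    by (intro bdd_aboveI2)
  then have "b x \<alpha> \<bullet> x - c x \<alpha> * (norm x)\<^sup>2 * ln (norm x)
      \<le> (SUP \<beta>. b x \<beta> \<bullet> x - c x \<beta> * (norm x)\<^sup>2 * ln (norm x))"
    by (rule cSUP_upper[OF UNIV_I])
  then show ?thesis using assms(2) by (rule order_trans)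
qed

lemma gaussian_barrier_exists:
  assumes "0 < R" "0 < \<delta>"
  obtains al where "0 < al"
    and "\<And>w t. R / 2 \<le> norm (w - x) \<Longrightarrow> norm (w - x) \<le> R \<Longrightarrow> (\<And>\<alpha>. c w \<alpha> * t \<le> 0) \<Longrightarrow>
           F w t (radial_grad (\<lambda>s. - (al * \<delta> * exp (- al * s))) x w)
             (radial_hess (\<lambda>s. - (al * \<delta> * exp (- al * s))) (\<lambda>s. al * (al * \<delta> * exp (- al * s))) x w) < 0"
proof -
  obtain K where K: "\<And>w \<alpha>. norm w \<le> norm x + R \<Longrightarrow> norm (b w \<alpha>) \<le> K"
    using b_locally_bounded by blast
  have "norm (b x undefined) \<le> K" using \<open>0 < R\<close> by (intro K) simp
  then have "0 \<le> K" by (rule order_trans[OF norm_ge_zero])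
  define al where "al = 2 * (K * R + Lam * real CARD('n) + lam) / (lam * R\<^sup>2)"
  have "0 < K * R + Lam * real CARD('n) + lam"
    using \<open>0 \<le> K\<close> \<open>0 < R\<close> lam_pos lam_le_Lam by (intro add_nonneg_pos add_nonneg_nonneg) auto
  then have "0 < al" unfolding al_def using lam_pos \<open>0 < R\<close> by simp
  have al: "K * R + Lam * real CARD('n) + lam \<le> lam * al * R\<^sup>2 / 2"
    using lam_pos \<open>0 < R\<close> by (simp add: al_def)
  show ?thesis
  proof (rule that)
    show "0 < al" by fact
    fix w t assume w: "R / 2 \<le> norm (w - x)" "norm (w - x) \<le> R" and sign: "\<And>\<alpha>. c w \<alpha> * t \<le> 0"
    have "norm w \<le> norm x + R" using norm_triangle_ineq[of x "w - x"] w(2) by simp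
    then show "F w t (radial_grad (\<lambda>s. - (al * \<delta> * exp (- al * s))) x w)
             (radial_hess (\<lambda>s. - (al * \<delta> * exp (- al * s))) (\<lambda>s. al * (al * \<delta> * exp (- al * s))) x w) < 0"
      unfolding radial_grad_def radial_hess_def
      using \<open>0 < R\<close> w \<open>0 < al\<close> al \<open>0 < \<delta>\<close> K sign
      by (intro gaussian_barrier_strict) auto
  qed
qed

lemma hopf_lemma:
  assumes super: "visc_supersolution F v" and sign: "\<And>x \<alpha>. c x \<alpha> * v x \<le> 0"
    and lower: "\<And>w. m \<le> v w" and inner: "\<And>w. norm (w - x) \<le> R / 2 \<Longrightarrow> m + \<delta> \<le> v w"
    and "0 < R" "0 < \<delta>" and y: "norm (y - x) = R"
  shows "m < v y"
proof (rule ccontr)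
  assume "\<not> m < v y"
  with lower[of y] have "v y = m" by simp
  obtain al where "0 < al" and strict:
    "\<And>w t. R / 2 \<le> norm (w - x) \<Longrightarrow> norm (w - x) \<le> R \<Longrightarrow> (\<And>\<alpha>. c w \<alpha> * t \<le> 0) \<Longrightarrow>
           F w t (radial_grad (\<lambda>s. - (al * \<delta> * exp (- al * s))) x w)
             (radial_hess (\<lambda>s. - (al * \<delta> * exp (- al * s))) (\<lambda>s. al * (al * \<delta> * exp (- al * s))) x w) < 0"
    using gaussian_barrier_exists[OF \<open>0 < R\<close> \<open>0 < \<delta>\<close>, where x = x] by blast
  define E where "E = exp (- al * R\<^sup>2)"
  define phi where "phi w = m - \<delta> * E + \<delta> * exp (- al * ((w - x) \<bullet> (w - x)))" for w
  let ?D = "radial_grad (\<lambda>s. - (al * \<delta> * exp (- al * s))) x"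
  let ?H = "radial_hess (\<lambda>s. - (al * \<delta> * exp (- al * s))) (\<lambda>s. al * (al * \<delta> * exp (- al * s))) x"
  have C2: "C2_with phi ?D ?H"
    unfolding phi_def[abs_def] by (rule C2_with_gaussian)
  have below: "phi w \<le> v w" for w
  proof (rule visc_supersolution_above_annulus[OF super C2])
    fix w assume "norm (w - x) \<le> R / 2 \<or> R \<le> norm (w - x)"
    then show "phi w \<le> v w"
    proof
      assume "norm (w - x) \<le> R / 2"
      have "\<delta> * exp (- al * ((w - x) \<bullet> (w - x))) \<le> \<delta>"
        using \<open>0 < al\<close> \<open>0 < \<delta>\<close> by (intro mult_left_le) auto
      moreover have "0 \<le> \<delta> * E" using \<open>0 < \<delta>\<close> by (simp add: E_def)
      ultimately show ?thesis using inner[OF \<open>norm (w - x) \<le> R / 2\<close>] by (simp add: phi_def)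
    next
      assume "R \<le> norm (w - x)"
      then have "R\<^sup>2 \<le> (w - x) \<bullet> (w - x)"
        using power_mono[of R "norm (w - x)" 2] \<open>0 < R\<close> by (simp add: power2_norm_eq_inner)
      then have "\<delta> * exp (- al * ((w - x) \<bullet> (w - x))) \<le> \<delta> * E"
        using \<open>0 < al\<close> \<open>0 < \<delta>\<close> by (simp add: E_def)
      then show ?thesis using lower[of w] by (simp add: phi_def)
    qed
  next
    fix w assume "R / 2 < norm (w - x)" "norm (w - x) < R"
    then show "F w (v w) (?D w) (?H w) < 0" by (intro strict sign) auto
  qed
  have "phi y = v y"
    using y \<open>v y = m\<close> by (simp add: phi_def E_def power2_norm_eq_inner[symmetric])
  then have "0 \<le> F y (v y) (?D y) (?H y)"
    using below by (intro visc_supersolutionD[OF super C2 zero_less_one]) auto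
  moreover have "F y (v y) (?D y) (?H y) < 0"
    using y \<open>0 < R\<close> by (intro strict sign) auto
  ultimately show False by simp
qed

lemma strong_minimum_principle:
  assumes super: "visc_supersolution F v" and sign: "\<And>x \<alpha>. c x \<alpha> * v x \<le> 0"
    and min: "\<And>x. v z \<le> v x"
  shows "v x = v z"
proof (rule ccontr)
  assume "v x \<noteq> v z"
  with min[of x] have "v z < v x" by simp
  define M where "M = {y. v y \<le> v z}"
  have "- M = {y. v z < v y}" unfolding M_def by auto
  then have "closed M"
    using lsc_open_superlevel[OF visc_supersolution_lsc[OF super]] by (simp add: closed_def)
  moreover have "z \<in> M" "x \<notin> M" using \<open>v z < v x\<close> unfolding M_def by auto
  ultimately obtain y where y: "y \<in> M" "infdist x M = dist x y" "0 < infdist x M"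
    using infdist_attains_inf[of M x] infdist_pos_not_in_closed[of M x] by blast
  define R where "R = infdist x M"
  have above: "v z < v w" if "norm (w - x) < R" for w
  proof -
    have "dist x w < infdist x M" using that by (simp add: R_def dist_norm norm_minus_commute)
    then have "w \<notin> M" using infdist_le[of w M x] by force
    then show ?thesis unfolding M_def by simp
  qed
  obtain q where q: "q \<in> cball x (R / 2)" "\<And>w. w \<in> cball x (R / 2) \<Longrightarrow> v q \<le> v w"
    using lsc_attains_min[OF visc_supersolution_lsc[OF super] compact_cball, of x "R / 2"] y(3)
    unfolding R_def by auto
  have "v z < v q" using above q(1) y(3) by (simp add: R_def dist_norm norm_minus_commute)
  have "v z < v y"
  proof (rule hopf_lemma[OF super sign min])
    show "v z + (v q - v z) \<le> v w" if "norm (w - x) \<le> R / 2" for w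
      using q(2) that by (simp add: dist_norm norm_minus_commute)
    show "norm (y - x) = R" using y(2) by (simp add: R_def dist_norm norm_minus_commute)
  qed (use y(3) \<open>v z < v q\<close> R_def in auto)
  then show False using y(1) unfolding M_def by simp
qed

end

lemma le_if_diff_mult_le:
  fixes a b h :: real
  assumes "0 \<le> h" and "\<And>\<epsilon>. 0 < \<epsilon> \<Longrightarrow> a - \<epsilon> * h \<le> b"
  shows "a \<le> b"
proof (rule field_le_epsilon)
  fix e :: real assume "0 < e"
  define \<epsilon> where "\<epsilon> = e / (h + 1)"
  have "0 < \<epsilon>" using \<open>0 < e\<close> \<open>0 \<le> h\<close> by (simp add: \<epsilon>_def)
  have "\<epsilon> * h = e * (h / (h + 1))" by (simp add: \<epsilon>_def)
  also have "\<dots> \<le> e" using \<open>0 < e\<close> \<open>0 \<le> h\<close> by (intro mult_left_le) auto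
  finally show "a \<le> b + e" using assms(2)[OF \<open>0 < \<epsilon>\<close>] by linarith
qed

subsection \<open>A logarithmic barrier\<close>

text \<open>
  With \<open>(ln s)/2\<close> in place of \<open>log_barrier\<close> both inequalities of \<open>log_barrier_eventually\<close>
  would be equalities; the \<open>ln ln\<close> term makes them hold for large s, the first one strictly.
  The shift by \<open>e\<close> keeps \<open>ln (e + s) \<ge> 1\<close> on \<open>s \<ge> 0\<close>.
\<close>

definition log_barrier :: "real \<Rightarrow> real" where
  "log_barrier s = (ln (exp 1 + s) + ln (ln (exp 1 + s))) / 2"

definition log_barrier' :: "real \<Rightarrow> real" where
  "log_barrier' s = (1 + 1 / ln (exp 1 + s)) / (2 * (exp 1 + s))"

definition log_barrier'' :: "real \<Rightarrow> real" where
  "log_barrier'' s = - (1 + 1 / ln (exp 1 + s) + 1 / (ln (exp 1 + s))\<^sup>2) / (2 * (exp 1 + s)\<^sup>2)"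

lemma one_lt_exp1_plus: "0 \<le> (s::real) \<Longrightarrow> 1 < exp 1 + s"
  using add_less_le_mono[of 1 "exp 1" 0 s] by simp

lemma one_le_ln_exp1_plus:
  fixes s :: real
  assumes "0 \<le> s"
  shows "1 \<le> ln (exp 1 + s)"
proof -
  have "0 < exp 1 + s" using one_lt_exp1_plus[OF assms] by simp
  then have "1 \<le> ln (exp 1 + s) \<longleftrightarrow> exp 1 \<le> exp 1 + s" by (rule ln_ge_iff)
  then show ?thesis using assms by simp
qed

lemma log_barrier_has_derivative:
  assumes "0 \<le> s"
  shows "(log_barrier has_real_derivative log_barrier' s) (at s)"
proof -
  have y: "0 < exp 1 + s" and L: "0 < ln (exp 1 + s)"
    using one_lt_exp1_plus[OF assms] one_le_ln_exp1_plus[OF assms] by simp_all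
  have ln: "((\<lambda>s. ln (exp 1 + s)) has_real_derivative 1 / (exp 1 + s)) (at s)"
    using y by (auto intro!: derivative_eq_intros simp: divide_inverse)
  have eq: "(1 / y + 1 / L * (1 / y)) / 2 = (1 + 1 / L) / (2 * y)" if "0 < y" "0 < L" for y L :: real
    using that by (simp add: field_simps)
  from DERIV_cdivide[OF DERIV_add[OF ln DERIV_chain2[OF DERIV_ln_divide[OF L] ln]], of 2]
  show ?thesis unfolding log_barrier_def[abs_def] log_barrier'_def eq[OF y L] .
qed

lemma log_barrier'_has_derivative:
  assumes "0 \<le> s"
  shows "(log_barrier' has_real_derivative log_barrier'' s) (at s)"
proof -
  have y: "0 < exp 1 + s" and L: "0 < ln (exp 1 + s)"
    using one_lt_exp1_plus[OF assms] one_le_ln_exp1_plus[OF assms] by simp_all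
  have ln: "((\<lambda>s. ln (exp 1 + s)) has_real_derivative 1 / (exp 1 + s)) (at s)"
    using y by (auto intro!: derivative_eq_intros simp: divide_inverse)
  have "((\<lambda>s. 1 / ln (exp 1 + s)) has_real_derivative
      (0 * ln (exp 1 + s) - 1 * (1 / (exp 1 + s))) / (ln (exp 1 + s) * ln (exp 1 + s))) (at s)"
    by (rule DERIV_divide[OF DERIV_const ln]) (use L in simp)
  from DERIV_add[OF DERIV_const this, of 1]
  have num: "((\<lambda>s. 1 + 1 / ln (exp 1 + s)) has_real_derivative
      0 + (0 * ln (exp 1 + s) - 1 * (1 / (exp 1 + s))) / (ln (exp 1 + s) * ln (exp 1 + s))) (at s)" .
  have den: "((\<lambda>s. 2 * (exp 1 + s)) has_real_derivative 2) (at s)"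
    by (auto intro!: derivative_eq_intros)
  have eq: "((0 + (0 * L - 1 * (1 / y)) / (L * L)) * (2 * y) - (1 + 1 / L) * 2) / ((2 * y) * (2 * y))
      = - (1 + 1 / L + 1 / L\<^sup>2) / (2 * y\<^sup>2)" if "0 < y" "0 < L" for y L :: real
    using that by (simp add: field_simps power2_eq_square)
  from DERIV_divide[OF num den]
  show ?thesis unfolding log_barrier'_def[abs_def] log_barrier''_def eq[OF y L] using y by simp
qed

lemma continuous_on_log_barrier'': "continuous_on {0..} log_barrier''"
proof (intro continuous_at_imp_continuous_on ballI)
  fix s :: real assume "s \<in> {0..}"
  then have "0 \<le> s" by simp
  have "0 < exp 1 + s" "0 < ln (exp 1 + s)"
    using one_lt_exp1_plus[OF \<open>0 \<le> s\<close>] one_le_ln_exp1_plus[OF \<open>0 \<le> s\<close>] by simp_all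
  then show "isCont log_barrier'' s"
    unfolding log_barrier''_def[abs_def] by (intro continuous_intros) auto
qed

lemma log_barrier'_pos:
  assumes "0 \<le> s"
  shows "0 < log_barrier' s"
proof -
  have "0 < exp 1 + s" "0 < ln (exp 1 + s)"
    using one_lt_exp1_plus[OF assms] one_le_ln_exp1_plus[OF assms] by simp_all
  then show ?thesis unfolding log_barrier'_def by (simp add: add_pos_pos)
qed

lemma log_barrier_nonneg:
  assumes "0 \<le> s"
  shows "0 \<le> log_barrier s"
proof -
  have "1 \<le> ln (exp 1 + s)" using one_le_ln_exp1_plus[OF assms] .
  moreover have "0 \<le> ln (ln (exp 1 + s))" using calculation by (rule ln_ge_zero)
  ultimately show ?thesis unfolding log_barrier_def by (intro divide_nonneg_pos add_nonneg_nonneg) auto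
qed

lemma log_barrier_eventually:
  "eventually (\<lambda>s. log_barrier' s + s * log_barrier'' s < 0 \<and> log_barrier' s * s * ln s \<le> log_barrier s) at_top"
proof (intro eventually_conj)
  show "eventually (\<lambda>s. log_barrier' s + s * log_barrier'' s < 0) at_top"
    unfolding log_barrier'_def log_barrier''_def by real_asymp
  show "eventually (\<lambda>s. log_barrier' s * s * ln s \<le> log_barrier s) at_top"
    unfolding log_barrier'_def log_barrier_def by real_asymp
qed

lemma ln_inner_self: "x \<noteq> 0 \<Longrightarrow> ln (x \<bullet> x) = 2 * ln (norm x)"
  by (simp add: power2_norm_eq_inner[symmetric] ln_realpow)

lemma ln_norm_le_log_barrier:
  assumes "1 \<le> norm x"
  shows "ln (norm x) \<le> log_barrier (x \<bullet> x)"
proof -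
  have "1 \<le> x \<bullet> x" using assms by (simp add: power2_norm_eq_inner[symmetric] one_le_power)
  then have "ln (x \<bullet> x) \<le> ln (exp 1 + x \<bullet> x)" by (subst ln_le_cancel_iff) (auto intro: add_pos_nonneg)
  moreover have "0 \<le> ln (ln (exp 1 + x \<bullet> x))" using one_le_ln_exp1_plus[of "x \<bullet> x"] by simp
  moreover have "x \<noteq> 0" using assms by auto
  ultimately show ?thesis unfolding log_barrier_def using ln_inner_self[of x] by simp
qed

lemma eventually_ge_log_barrier:
  fixes v :: "real^'n \<Rightarrow> real"
  assumes growth: "Liminf at_infinity (\<lambda>x. ereal (v x / ln (norm x))) \<ge> 0" and "0 < \<epsilon>"
  shows "\<exists>R. \<forall>x. R \<le> norm x \<longrightarrow> m - \<epsilon> * log_barrier (x \<bullet> x) \<le> v x"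
proof -
  have "ereal (- \<epsilon> / 2) < 0" using \<open>0 < \<epsilon>\<close> by simp
  then have "ereal (- \<epsilon> / 2) < Liminf at_infinity (\<lambda>x. ereal (v x / ln (norm x)))"
    using growth by (rule less_le_trans)
  then have "eventually (\<lambda>x. ereal (- \<epsilon> / 2) < ereal (v x / ln (norm x))) at_infinity"
    by (rule less_LiminfD)
  then obtain R1 where R1: "\<And>x. R1 \<le> norm x \<Longrightarrow> - \<epsilon> / 2 < v x / ln (norm x)"
    unfolding eventually_at_infinity by auto
  have "m - \<epsilon> * log_barrier (x \<bullet> x) \<le> v x"
    if far: "max R1 (exp (2 * \<bar>m\<bar> / \<epsilon>)) + 1 \<le> norm x" for x
  proof -
    have "1 \<le> exp (2 * \<bar>m\<bar> / \<epsilon>)" using \<open>0 < \<epsilon>\<close> by simp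
    then have nx: "R1 \<le> norm x" "exp (2 * \<bar>m\<bar> / \<epsilon>) < norm x" "1 < norm x"
      using far max.cobounded1[of R1] max.cobounded2[of _ R1] by linarith+
    then have "x \<noteq> 0" by auto
    with nx have L: "2 * \<bar>m\<bar> / \<epsilon> < ln (norm x)" and "0 < ln (norm x)"
      using ln_less_cancel_iff[of "exp (2 * \<bar>m\<bar> / \<epsilon>)" "norm x"] by simp_all
    have "- \<epsilon> / 2 < v x / ln (norm x)" using R1 nx(1) by simp
    then have "- (\<epsilon> * ln (norm x)) < 2 * v x"
      using \<open>0 < ln (norm x)\<close> by (simp add: field_simps)
    moreover have "2 * \<bar>m\<bar> < ln (norm x) * \<epsilon>"
      using L pos_divide_less_eq[OF \<open>0 < \<epsilon>\<close>] by blast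
    then have "2 * m < \<epsilon> * ln (norm x)"
      using abs_ge_self[of m] mult.commute[of \<epsilon> "ln (norm x)"] by linarith
    moreover have "\<epsilon> * ln (norm x) \<le> \<epsilon> * log_barrier (x \<bullet> x)"
      using ln_norm_le_log_barrier[of x] nx(3) \<open>0 < \<epsilon>\<close> by simp
    ultimately show ?thesis by linarith
  qed
  then show ?thesis by blast
qed

lemma C2_with_log_barrier:
  "C2_with (\<lambda>w::real^'n. m - \<epsilon> * log_barrier (w \<bullet> w))
     (radial_grad (\<lambda>s. - (\<epsilon> * log_barrier' s)) 0)
     (radial_hess (\<lambda>s. - (\<epsilon> * log_barrier' s)) (\<lambda>s. - (\<epsilon> * log_barrier'' s)) 0)"
proof (rule C2_with_cong[OF C2_with_radial[where G = "\<lambda>s. m - \<epsilon> * log_barrier s"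
      and G' = "\<lambda>s. - (\<epsilon> * log_barrier' s)" and G'' = "\<lambda>s. - (\<epsilon> * log_barrier'' s)" and y = 0]])
  show "((\<lambda>s. m - \<epsilon> * log_barrier s) has_real_derivative - (\<epsilon> * log_barrier' s)) (at s)"
    if "0 \<le> s" for s
    using log_barrier_has_derivative[OF that] by (auto intro!: derivative_eq_intros)
  show "((\<lambda>s. - (\<epsilon> * log_barrier' s)) has_real_derivative - (\<epsilon> * log_barrier'' s)) (at s)"
    if "0 \<le> s" for s
    using log_barrier'_has_derivative[OF that] by (auto intro!: derivative_eq_intros)
  show "continuous_on {0..} (\<lambda>s. - (\<epsilon> * log_barrier'' s))"
    using continuous_on_log_barrier'' by (intro continuous_intros)
qed simp_all

subsection \<open>Attainment of the minimum\<close>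

context elliptic_bellman
begin

lemma log_barrier_strict_subsolution:
  assumes "1 \<le> \<rho>" "\<rho> < norm w" "0 < \<epsilon>"
    and drift: "\<And>\<alpha>. b w \<alpha> \<bullet> w - c w \<alpha> * (norm w)\<^sup>2 * ln (norm w) \<le> lam - (real CARD('n) - 1) * Lam"
    and barrier: "\<And>s. \<rho> \<le> s \<Longrightarrow>
       log_barrier' s + s * log_barrier'' s < 0 \<and> log_barrier' s * s * ln s \<le> log_barrier s"
    and sign: "(\<forall>\<alpha>. c w \<alpha> = 0) \<or> m \<le> 0"
    and below: "t < m - \<epsilon> * log_barrier (w \<bullet> w)"
  shows "F w t (radial_grad (\<lambda>s. - (\<epsilon> * log_barrier' s)) 0 w)
           (radial_hess (\<lambda>s. - (\<epsilon> * log_barrier' s)) (\<lambda>s. - (\<epsilon> * log_barrier'' s)) 0 w) < 0"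
proof -
  let ?q = "w \<bullet> w"
  have "1 < norm w" using assms(1,2) by simp
  then have "norm w \<le> ?q"
    using mult_left_mono[of 1 "norm w" "norm w"]
    by (simp add: power2_norm_eq_inner[symmetric] power2_eq_square)
  then have q: "\<rho> \<le> ?q" using assms(2) by simp
  have qln: "?q * ln ?q = 2 * ((norm w)\<^sup>2 * ln (norm w))"
    using ln_inner_self[of w] \<open>1 < norm w\<close> by (auto simp: power2_norm_eq_inner)
  show ?thesis
    unfolding radial_grad_def radial_hess_def diff_zero
  proof (rule log_barrier_strict)
    show "w \<noteq> 0" using \<open>1 < norm w\<close> by auto
    show "0 < \<epsilon> * log_barrier' ?q" using \<open>0 < \<epsilon>\<close> log_barrier'_pos[of ?q] by simp
    have "\<epsilon> * log_barrier' ?q + ?q * (\<epsilon> * log_barrier'' ?q)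
        = \<epsilon> * (log_barrier' ?q + ?q * log_barrier'' ?q)"
      by (simp add: algebra_simps)
    then show "\<epsilon> * log_barrier' ?q + ?q * (\<epsilon> * log_barrier'' ?q) < 0"
      using barrier[OF q] \<open>0 < \<epsilon>\<close> by (simp add: mult_pos_neg)
    show "b w \<alpha> \<bullet> w - c w \<alpha> * (norm w)\<^sup>2 * ln (norm w) \<le> lam - (real CARD('n) - 1) * Lam" for \<alpha>
      by (rule drift)
    show "c w \<alpha> * (t + 2 * (\<epsilon> * log_barrier' ?q) * ((norm w)\<^sup>2 * ln (norm w))) \<le> 0" for \<alpha>
      using sign
    proof
      assume "m \<le> 0"
      have "2 * (\<epsilon> * log_barrier' ?q) * ((norm w)\<^sup>2 * ln (norm w))
          = \<epsilon> * (log_barrier' ?q * ?q * ln ?q)"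
        unfolding mult.assoc[of "log_barrier' ?q"] qln by (simp add: ac_simps)
      also have "\<dots> \<le> \<epsilon> * log_barrier ?q"
        using barrier[OF q] \<open>0 < \<epsilon>\<close> by (intro mult_left_mono) auto
      finally have "t + 2 * (\<epsilon> * log_barrier' ?q) * ((norm w)\<^sup>2 * ln (norm w)) \<le> 0"
        using below \<open>m \<le> 0\<close> by simp
      then show ?thesis by (intro mult_nonneg_nonpos c_nonneg)
    qed simp
  qed
qed

lemma log_barrier_comparison:
  assumes super: "visc_supersolution F v"
    and growth: "Liminf at_infinity (\<lambda>x. ereal (v x / ln (norm x))) \<ge> 0"
    and "1 \<le> \<rho>"
    and drift: "\<And>x \<alpha>. \<rho> \<le> norm x \<Longrightarrow>
       b x \<alpha> \<bullet> x - c x \<alpha> * (norm x)\<^sup>2 * ln (norm x) \<le> lam - (real CARD('n) - 1) * Lam"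
    and barrier: "\<And>s. \<rho> \<le> s \<Longrightarrow>
       log_barrier' s + s * log_barrier'' s < 0 \<and> log_barrier' s * s * ln s \<le> log_barrier s"
    and inner: "\<And>x. norm x \<le> \<rho> \<Longrightarrow> m \<le> v x"
    and sign: "(\<forall>x \<alpha>. c x \<alpha> = 0) \<or> m \<le> 0"
    and "0 < \<epsilon>"
  shows "m - \<epsilon> * log_barrier (x \<bullet> x) \<le> v x"
proof -
  obtain R where R: "\<And>w. R \<le> norm w \<Longrightarrow> m - \<epsilon> * log_barrier (w \<bullet> w) \<le> v w"
    using eventually_ge_log_barrier[OF growth \<open>0 < \<epsilon>\<close>, of m] by blast
  show ?thesis
  proof (rule visc_supersolution_above_annulus[OF super C2_with_log_barrier,
        where y = 0 and r = \<rho> and R = R])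
    fix w :: "real^'n" assume "norm (w - 0) \<le> \<rho> \<or> R \<le> norm (w - 0)"
    then show "m - \<epsilon> * log_barrier (w \<bullet> w) \<le> v w"
    proof
      assume "norm (w - 0) \<le> \<rho>"
      moreover have "0 \<le> \<epsilon> * log_barrier (w \<bullet> w)"
        using \<open>0 < \<epsilon>\<close> log_barrier_nonneg[of "w \<bullet> w"] by simp
      ultimately show ?thesis using inner[of w] by simp
    qed (use R in simp)
  next
    fix w :: "real^'n"
    assume "\<rho> < norm (w - 0)" "norm (w - 0) < R" "v w < m - \<epsilon> * log_barrier (w \<bullet> w)"
    then show "F w (v w) (radial_grad (\<lambda>s. - (\<epsilon> * log_barrier' s)) 0 w)
           (radial_hess (\<lambda>s. - (\<epsilon> * log_barrier' s)) (\<lambda>s. - (\<epsilon> * log_barrier'' s)) 0 w) < 0"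
      using \<open>1 \<le> \<rho>\<close> \<open>0 < \<epsilon>\<close> drift barrier sign
      by (intro log_barrier_strict_subsolution) auto
  qed
qed

lemma visc_supersolution_attains_min:
  assumes super: "visc_supersolution F v"
    and growth: "Liminf at_infinity (\<lambda>x. ereal (v x / ln (norm x))) \<ge> 0"
    and drift: "\<exists>Ro>0. \<forall>x. Ro \<le> norm x \<longrightarrow>
       (SUP \<alpha>. b x \<alpha> \<bullet> x - c x \<alpha> * (norm x)\<^sup>2 * ln (norm x)) \<le> lam - (real CARD('n) - 1) * Lam"
    and sign: "(\<forall>x \<alpha>. c x \<alpha> = 0) \<or> (\<forall>x. v x \<le> 0)"
  shows "\<exists>z. \<forall>x. v z \<le> v x"
proof -
  obtain Ro where Ro: "\<And>x. Ro \<le> norm x \<Longrightarrow>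
       (SUP \<alpha>. b x \<alpha> \<bullet> x - c x \<alpha> * (norm x)\<^sup>2 * ln (norm x)) \<le> lam - (real CARD('n) - 1) * Lam"
    using drift by blast
  obtain S where S: "\<And>s. S \<le> s \<Longrightarrow>
       log_barrier' s + s * log_barrier'' s < 0 \<and> log_barrier' s * s * ln s \<le> log_barrier s"
    using log_barrier_eventually unfolding eventually_at_top_linorder by blast
  define \<rho> where "\<rho> = max Ro (max 1 S)"
  have "1 \<le> \<rho>" by (simp add: \<rho>_def)
  then obtain z where "\<forall>x\<in>cball 0 \<rho>. v z \<le> v x"
    using lsc_attains_min[OF visc_supersolution_lsc[OF super] compact_cball, of 0 \<rho>] by auto
  then have z: "\<And>x. norm x \<le> \<rho> \<Longrightarrow> v z \<le> v x" by simp
  have "v z \<le> v x" for x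
  proof (rule le_if_diff_mult_le[OF log_barrier_nonneg])
    show "0 \<le> x \<bullet> x" by simp
    fix \<epsilon> :: real assume "0 < \<epsilon>"
    show "v z - \<epsilon> * log_barrier (x \<bullet> x) \<le> v x"
    proof (rule log_barrier_comparison[OF super growth])
      show "1 \<le> \<rho>" by fact
      show "b y \<alpha> \<bullet> y - c y \<alpha> * (norm y)\<^sup>2 * ln (norm y) \<le> lam - (real CARD('n) - 1) * Lam"
        if "\<rho> \<le> norm y" for y \<alpha>
        using that by (intro drift_bound_pointwise Ro) (auto simp: \<rho>_def)
      show "log_barrier' s + s * log_barrier'' s < 0 \<and> log_barrier' s * s * ln s \<le> log_barrier s"
        if "\<rho> \<le> s" for s
        using that S by (simp add: \<rho>_def)
      show "(\<forall>x \<alpha>. c x \<alpha> = 0) \<or> v z \<le> 0" using sign by auto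
    qed (use z \<open>0 < \<epsilon>\<close> in auto)
  qed
  then show ?thesis by blast
qed

end

theorem corollary3p2:
  fixes F :: "real^'n \<Rightarrow> real \<Rightarrow> real^'n \<Rightarrow> real^'n^'n \<Rightarrow> real"
    and b :: "real^'n \<Rightarrow> 'a::metric_space \<Rightarrow> real^'n"
    and c :: "real^'n \<Rightarrow> 'a \<Rightarrow> real"
    and v :: "real^'n \<Rightarrow> real"
    and lam Lam :: real
  assumes F_cont: "continuous_on {(((x, t), p), X). symmetric_mat X}
                     (\<lambda>(((x, t), p), X). F x t p X)"
    and lam_pos: "0 < lam" and lam_le: "lam \<le> Lam"
    and unif_ell: "\<And>x t p X Q. symmetric_mat X \<Longrightarrow> symmetric_mat Q \<Longrightarrow> psd_mat Q \<Longrightarrow>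
           lam * trace Q \<le> F x t p X - F x t p (X + Q) \<and>
           F x t p X - F x t p (X + Q) \<le> Lam * trace Q"
    and b_cont: "continuous_on UNIV (\<lambda>(x, \<alpha>). b x \<alpha>)"
    and c_cont: "continuous_on UNIV (\<lambda>(x, \<alpha>). c x \<alpha>)"
    and bc_bound: "\<And>R. R > 0 \<Longrightarrow> \<exists>K. (\<forall>x \<alpha>. norm x \<le> R \<longrightarrow> norm (b x \<alpha>) + \<bar>c x \<alpha>\<bar> \<le> K) \<and>
           (\<forall>x y \<alpha>. norm x \<le> R \<longrightarrow> norm y \<le> R \<longrightarrow> norm (b x \<alpha> - b y \<alpha>) \<le> K * norm (x - y))"
    and c_nonneg: "\<And>x \<alpha>. c x \<alpha> \<ge> 0"
    and c_unif: "\<And>R e. R > 0 \<Longrightarrow> e > 0 \<Longrightarrow> \<exists>d>0. \<forall>x y \<alpha>. norm x \<le> R \<longrightarrow> norm y \<le> R \<longrightarrow>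
           dist x y < d \<longrightarrow> \<bar>c x \<alpha> - c y \<alpha>\<bar> < e"
    and Ro: "\<exists>Ro>0. \<forall>x. norm x \<ge> Ro \<longrightarrow>
           (SUP \<alpha>. b x \<alpha> \<bullet> x - c x \<alpha> * (norm x)\<^sup>2 * ln (norm x))
             \<le> lam - (real CARD('n) - 1) * Lam"
    and F_sup: "\<And>x t p. F x t p 0 \<le> (SUP \<alpha>. c x \<alpha> * t - b x \<alpha> \<bullet> p)"
    and super: "visc_supersolution F v"
    and growth: "Liminf at_infinity (\<lambda>x. ereal (v x / ln (norm x))) \<ge> 0"
    and alt: "(\<forall>x \<alpha>. c x \<alpha> = 0) \<or> (\<forall>x. v x \<le> 0)"
  shows "\<exists>k. \<forall>x. v x = k"
proof -
  have b_bounded: "\<exists>K. \<forall>x \<alpha>. norm x \<le> R \<longrightarrow> norm (b x \<alpha>) \<le> K" for R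
  proof -
    have "0 < max R 1" by simp
    then obtain K where K: "\<forall>x \<alpha>. norm x \<le> max R 1 \<longrightarrow> norm (b x \<alpha>) + \<bar>c x \<alpha>\<bar> \<le> K"
      using bc_bound by blast
    have "norm (b x \<alpha>) \<le> K" if "norm x \<le> R" for x \<alpha>
    proof -
      have "norm (b x \<alpha>) + \<bar>c x \<alpha>\<bar> \<le> K" using K max.coboundedI1[OF that, of 1] by blast
      then show ?thesis using abs_ge_zero[of "c x \<alpha>"] by linarith
    qed
    then show ?thesis by blast
  qed
  interpret B: elliptic_bellman F lam Lam b c
    by unfold_locales (fact lam_pos lam_le unif_ell F_sup b_bounded c_nonneg)+
  obtain z where z: "\<And>x. v z \<le> v x"
    using B.visc_supersolution_attains_min[OF super growth Ro alt] by blast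
  have "c x \<alpha> * v x \<le> 0" for x \<alpha>
    using alt c_nonneg[of x \<alpha>] by (auto intro: mult_nonneg_nonpos)
  then show ?thesis using B.strong_minimum_principle[OF super _ z] by blast
qed

end
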